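(* Let $f_1,\dots,f_k$ be tropical polynomials in $n$ variables, each consisting of at most $m$ monomials, and let $V=V(f_1,\dots,f_k)\subset\mathbb{R}^n$ be the tropical prevariety they define. Assume $n\le k\binom{m}{2}$. Then the number of all faces of $V$ is at most $$n\,2^n\binom{k\binom{m}{2}}{n}.$$
   Context: A tropical polynomial $f$ in $n$ variables is a function $f(x)=\min\{L_1(x),\dots,L_m(x)\}$ on $\mathbb{R}^n$, where each tropical monomial $L_j$ is an affine-linear function $L_j(x)=\sum_{i=1}^n a_{ji}x_i+b_j$ (with non-negative integer coefficients $a_{ji}$ and real $b_j$; the result also holds for arbitrary real coefficients). The tropical hypersurface $V(f)$ is the set of points where this piecewise-linear function is not smooth (where the minimum is attained by at least two monomials). A tropical prevariety $V(f_1,\dots,f_k)$ is $V(f_1)\cap\cdots\cap V(f_k)$. Writing $f_i=\min\{L_{i,1},\dots,L_{i,m}\}$ and $D=\{(i,j):1\le i\le k,\ 1\le j\le m\}$, for $B\subset D$ let $U_B$ be the set of $x\in\mathbb{R}^n$ such that $\min_j L_{i,j}(x)=L_{i,j_0}(x)$ for every $(i,j_0)\in B$ and $\min_j L_{i,j}(x)<L_{i,j_1}(x)$ for every $(i,j_1)\notin B$. The faces of $V$ are the closures of the nonempty sets $U_B$ contained in $V$ (i.e. such that for every $i$ there are $j_0<j_1$ with $(i,j_0),(i,j_1)\in B$). *)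

theory Defs
  imports "HOL-Analysis.Analysis"
begin

text \<open>A system of k tropical polynomials in the variables x \<in> real^'n (n = CARD('n)).
  Polynomial i (i < k) has mc i monomials, indexed by j < mc i; monomial (i,j) is
  L i j x = (sum over coordinates l of a i j l * x l) + b i j,
  with non-negative integer exponents a i j l and real constant b i j.\<close>

definition trop_mono :: "(nat \<Rightarrow> nat \<Rightarrow> 'n::finite \<Rightarrow> nat) \<Rightarrow> (nat \<Rightarrow> nat \<Rightarrow> real)
    \<Rightarrow> nat \<Rightarrow> nat \<Rightarrow> real^'n \<Rightarrow> real" where
  "trop_mono a b i j x = (\<Sum>l\<in>UNIV. real (a i j l) * x $ l) + b i j"

definition trop_poly :: "(nat \<Rightarrow> nat \<Rightarrow> 'n::finite \<Rightarrow> nat) \<Rightarrow> (nat \<Rightarrow> nat \<Rightarrow> real)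
    \<Rightarrow> (nat \<Rightarrow> nat) \<Rightarrow> nat \<Rightarrow> real^'n \<Rightarrow> real" where
  "trop_poly a b mc i x = Min ((\<lambda>j. trop_mono a b i j x) ` {..<mc i})"

definition trop_hypersurface :: "(nat \<Rightarrow> nat \<Rightarrow> 'n::finite \<Rightarrow> nat) \<Rightarrow> (nat \<Rightarrow> nat \<Rightarrow> real)
    \<Rightarrow> (nat \<Rightarrow> nat) \<Rightarrow> nat \<Rightarrow> (real^'n) set" where
  "trop_hypersurface a b mc i = {x. \<exists>j0<mc i. \<exists>j1<mc i. j0 \<noteq> j1 \<and>
      trop_mono a b i j0 x = trop_poly a b mc i x \<and> trop_mono a b i j1 x = trop_poly a b mc i x}"

definition trop_prevariety :: "(nat \<Rightarrow> nat \<Rightarrow> 'n::finite \<Rightarrow> nat) \<Rightarrow> (nat \<Rightarrow> nat \<Rightarrow> real)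
    \<Rightarrow> (nat \<Rightarrow> nat) \<Rightarrow> nat \<Rightarrow> (real^'n) set" where
  "trop_prevariety a b mc k = (\<Inter>i\<in>{..<k}. trop_hypersurface a b mc i)"

definition trop_index :: "(nat \<Rightarrow> nat) \<Rightarrow> nat \<Rightarrow> (nat \<times> nat) set" where
  "trop_index mc k = {(i, j). i < k \<and> j < mc i}"

definition trop_cell :: "(nat \<Rightarrow> nat \<Rightarrow> 'n::finite \<Rightarrow> nat) \<Rightarrow> (nat \<Rightarrow> nat \<Rightarrow> real)
    \<Rightarrow> (nat \<Rightarrow> nat) \<Rightarrow> nat \<Rightarrow> (nat \<times> nat) set \<Rightarrow> (real^'n) set" where
  "trop_cell a b mc k B = {x.
      (\<forall>(i, j)\<in>B. trop_mono a b i j x = trop_poly a b mc i x) \<and>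
      (\<forall>(i, j)\<in>trop_index mc k - B. trop_poly a b mc i x < trop_mono a b i j x)}"

definition trop_faces :: "(nat \<Rightarrow> nat \<Rightarrow> 'n::finite \<Rightarrow> nat) \<Rightarrow> (nat \<Rightarrow> nat \<Rightarrow> real)
    \<Rightarrow> (nat \<Rightarrow> nat) \<Rightarrow> nat \<Rightarrow> (real^'n) set set" where
  "trop_faces a b mc k = {closure (trop_cell a b mc k B) | B.
      B \<subseteq> trop_index mc k \<and> trop_cell a b mc k B \<noteq> {} \<and>
      trop_cell a b mc k B \<subseteq> trop_prevariety a b mc k}"

end

theory Submission
  imports Defs
begin

text \<open>
  All points of a cell U_B have B as their set of minimising monomials, so V has at most as
  many faces as there are such sets at points of V. This set is determined by the signs of the
  q \<le> K = k (m choose 2) affine functions L_ij - L_ij' (j < j'). If K \<le> 2n, count directly: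
  on V the set is recovered from its tied pairs, so there are at most 2^K of them. Otherwise,
  V lies in the union of the q hyperplanes L_ij = L_ij', and q affine functions realise at most
  the sum over i \<le> d of (q choose i) 2^i sign vectors on a d-dimensional affine set: when a
  function f is added, an old sign vector splits only if it is also realised on the zero set of
  f, which has smaller dimension, because f cannot change sign along a segment on which the old
  signs are constant without vanishing there.
\<close>

section \<open>Sign vectors of affine functions\<close>

definition sign_vector :: "('i \<Rightarrow> 'a \<Rightarrow> real) \<Rightarrow> 'i set \<Rightarrow> 'a \<Rightarrow> 'i \<Rightarrow> real" where
  "sign_vector h Q x = restrict (\<lambda>q. sgn (h q x)) Q"

definition sign_vector_bound :: "nat \<Rightarrow> nat \<Rightarrow> nat" where
  "sign_vector_bound q d = (\<Sum>i\<le>d. (q choose i) * 2 ^ i)"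

lemma sign_vector_bound_0_left [simp]: "sign_vector_bound 0 d = 1"
  unfolding sign_vector_bound_def by (induction d) auto

lemma sign_vector_bound_Suc_Suc:
  "sign_vector_bound (Suc q) (Suc d) = sign_vector_bound q (Suc d) + 2 * sign_vector_bound q d"
proof -
  have "sign_vector_bound (Suc q) (Suc d) = 1 + (\<Sum>i\<le>d. (Suc q choose Suc i) * 2 ^ Suc i)"
    unfolding sign_vector_bound_def by (subst sum.atMost_Suc_shift) simp
  also have "\<dots> = 1 + (\<Sum>i\<le>d. (q choose Suc i) * 2 ^ Suc i) + (\<Sum>i\<le>d. (q choose i) * 2 ^ Suc i)"
    by (simp add: sum.distrib algebra_simps)
  also have "1 + (\<Sum>i\<le>d. (q choose Suc i) * 2 ^ Suc i) = sign_vector_bound q (Suc d)"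
    unfolding sign_vector_bound_def by (subst sum.atMost_Suc_shift) simp
  also have "(\<Sum>i\<le>d. (q choose i) * 2 ^ Suc i) = 2 * sign_vector_bound q d"
    unfolding sign_vector_bound_def by (simp add: sum_distrib_left algebra_simps)
  finally show ?thesis .
qed

lemma sign_vector_bound_mono: "q \<le> q' \<Longrightarrow> sign_vector_bound q d \<le> sign_vector_bound q' d"
  unfolding sign_vector_bound_def by (intro sum_mono mult_right_mono binomial_right_mono) auto

lemma sign_vector_insert:
  "sign_vector h (insert q Q) x = (sign_vector h Q x)(q := sgn (h q x))"
  by (auto simp: sign_vector_def)

lemma finite_sign_vector_image: "finite Q \<Longrightarrow> finite (sign_vector h Q ` S)"
proof -
  assume "finite Q"
  have "sign_vector h Q ` S \<subseteq> PiE Q (\<lambda>_. {-1, 0, 1})"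
    by (auto simp: sign_vector_def sgn_real_def split: if_splits)
  moreover have "finite (PiE Q (\<lambda>_. {-1::real, 0, 1}))"
    using \<open>finite Q\<close> by (intro finite_PiE) auto
  ultimately show ?thesis by (rule finite_subset)
qed

lemma card_image_le_card_image_if_factors:
  assumes "finite (g ` S)" and "\<And>x y. x \<in> S \<Longrightarrow> y \<in> S \<Longrightarrow> g x = g y \<Longrightarrow> f x = f y"
  shows "card (f ` S) \<le> card (g ` S)"
proof -
  have "f x = f (inv_into S g (g x))" if "x \<in> S" for x
    using assms(2)[of x "inv_into S g (g x)"] that by (simp add: inv_into_into f_inv_into_f)
  then have "f ` S = (f \<circ> inv_into S g) ` g ` S"
    by (simp add: image_comp cong: image_cong)
  then show ?thesis
    using card_image_le[OF assms(1)] by simp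
qed

lemma sgn_convex_combination:
  fixes u v t :: real
  assumes "0 \<le> t" "t \<le> 1" "sgn u = sgn v"
  shows "sgn ((1 - t) * u + t * v) = sgn u"
proof -
  have "(1 - t) * u + t * v > 0" if "u > 0" "v > 0"
  proof (cases "t = 0")
    case False
    then show ?thesis using assms that by (intro add_nonneg_pos) auto
  qed (use that in simp)
  moreover have "(1 - t) * u + t * v < 0" if "u < 0" "v < 0"
  proof (cases "t = 0")
    case False
    then show ?thesis using assms that by (intro add_nonpos_neg mult_nonneg_nonpos mult_pos_neg) auto
  qed (use that in simp)
  ultimately show ?thesis
    using assms(3) by (cases u "0::real" rule: linorder_cases) (auto simp: sgn_real_def split: if_splits)
qed

lemma affine_function_convex_combination:
  assumes "\<And>x. f x = c \<bullet> x + e"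
  shows "f ((1 - t) *\<^sub>R x + t *\<^sub>R y) = (1 - t) * f x + t * f y"
  using assms by (simp add: inner_add_right algebra_simps)

lemma sign_vector_zero_between:
  fixes h :: "'i \<Rightarrow> 'a::real_inner \<Rightarrow> real"
  assumes affine: "\<And>r. \<exists>c e. \<forall>x. h r x = c \<bullet> x + e"
    and same: "sign_vector h Q x = sign_vector h Q y"
    and change: "h q x * h q y < 0"
  shows "\<exists>z\<in>closed_segment x y. h q z = 0 \<and> sign_vector h Q z = sign_vector h Q x"
proof -
  define t where "t = h q x / (h q x - h q y)"
  have "0 < t" "t < 1"
    using change by (auto simp: t_def zero_less_mult_iff mult_less_0_iff field_simps)
  define z where "z = (1 - t) *\<^sub>R x + t *\<^sub>R y"
  have z: "h r z = (1 - t) * h r x + t * h r y" for r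
    using affine[of r] unfolding z_def by (metis affine_function_convex_combination)
  have "z \<in> closed_segment x y"
    unfolding z_def closed_segment_def using \<open>0 < t\<close> \<open>t < 1\<close> by auto
  moreover have "h q z = 0"
  proof -
    have "h q x \<noteq> h q y" using change by (metis not_square_less_zero)
    then show ?thesis unfolding z t_def by (simp add: field_simps)
  qed
  moreover have "sign_vector h Q z = sign_vector h Q x"
  proof (rule ext)
    fix r
    show "sign_vector h Q z r = sign_vector h Q x r"
    proof (cases "r \<in> Q")
      case True
      then have "sgn (h r x) = sgn (h r y)"
        using same unfolding sign_vector_def by (metis restrict_apply')
      then show ?thesis
        using True \<open>0 < t\<close> \<open>t < 1\<close> by (simp add: sign_vector_def z sgn_convex_combination)
    qed (simp add: sign_vector_def)
  qed
  ultimately show ?thesis by blast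
qed

lemma sgn_eq_if_sign_vector_eq_not_on_zero_set:
  fixes h :: "'i \<Rightarrow> 'a::real_inner \<Rightarrow> real"
  assumes affine: "\<And>r. \<exists>c e. \<forall>x. h r x = c \<bullet> x + e"
    and "convex S" "x \<in> S" "y \<in> S"
    and same: "sign_vector h Q x = sign_vector h Q y"
    and off: "sign_vector h Q x \<notin> sign_vector h Q ` (S \<inter> {z. h q z = 0})"
  shows "sgn (h q x) = sgn (h q y)"
proof -
  have on_zero_set: "sign_vector h Q w \<in> sign_vector h Q ` (S \<inter> {z. h q z = 0})"
    if "w \<in> S" "h q w = 0" for w
    using that by blast
  have nonzero: "h q x \<noteq> 0" "h q y \<noteq> 0"
    using on_zero_set[of x] on_zero_set[of y] off same \<open>x \<in> S\<close> \<open>y \<in> S\<close> by auto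
  have "\<not> h q x * h q y < 0"
  proof
    assume "h q x * h q y < 0"
    then obtain z where "z \<in> closed_segment x y" "h q z = 0" "sign_vector h Q z = sign_vector h Q x"
      using sign_vector_zero_between[of h Q x y q] affine same by blast
    moreover have "closed_segment x y \<subseteq> S"
      using \<open>x \<in> S\<close> \<open>y \<in> S\<close> \<open>convex S\<close> by (rule closed_segment_subset)
    ultimately show False
      using on_zero_set[of z] off by auto
  qed
  then show ?thesis
    using nonzero by (auto simp: sgn_real_def mult_less_0_iff)
qed

lemma card_sign_vector_image_insert_le_if_same_sign:
  assumes "finite Q" and same_sign: "\<And>x y. x \<in> S \<Longrightarrow> y \<in> S \<Longrightarrow> sgn (h q x) = sgn (h q y)"
  shows "card (sign_vector h (insert q Q) ` S) \<le> card (sign_vector h Q ` S)"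
proof (rule card_image_le_card_image_if_factors)
  show "finite (sign_vector h Q ` S)"
    using \<open>finite Q\<close> by (rule finite_sign_vector_image)
  fix x y assume "x \<in> S" "y \<in> S" "sign_vector h Q x = sign_vector h Q y"
  then show "sign_vector h (insert q Q) x = sign_vector h (insert q Q) y"
    using same_sign[of x y] by (simp add: sign_vector_insert)
qed

text \<open>Off the zero set of h q an old sign vector determines the new one; on it, it can
  split into at most three.\<close>

lemma card_sign_vector_image_insert_le:
  fixes h :: "'i \<Rightarrow> 'a::real_inner \<Rightarrow> real"
  assumes affine: "\<And>r. \<exists>c e. \<forall>x. h r x = c \<bullet> x + e"
    and "convex S" "finite Q"
  shows "card (sign_vector h (insert q Q) ` S)
    \<le> card (sign_vector h Q ` S) + 2 * card (sign_vector h Q ` (S \<inter> {x. h q x = 0}))"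
proof -
  define \<sigma> where "\<sigma> = sign_vector h Q"
  define T where "T = \<sigma> ` (S \<inter> {x. h q x = 0})"
  define pair where "pair x = (\<sigma> x, sgn (h q x))" for x
  define A where "A = pair ` {x \<in> S. \<sigma> x \<notin> T}"
  have fin: "finite (\<sigma> ` S)" "finite T"
    unfolding \<sigma>_def T_def using \<open>finite Q\<close> by (auto intro: finite_sign_vector_image)
  have "T \<subseteq> \<sigma> ` S" unfolding T_def by blast
  have "pair ` S \<subseteq> \<sigma> ` S \<times> {-1, 0, 1}"
    by (auto simp: pair_def sgn_real_def split: if_splits)
  then have fin_pair: "finite (pair ` S)"
    by (rule finite_subset) (simp add: fin(1))
  then have fin_A: "finite A"
    unfolding A_def by (rule finite_subset[rotated]) auto
  have "sign_vector h (insert q Q) ` S = (\<lambda>(v, s). v(q := s)) ` pair ` S"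
    by (simp add: image_image sign_vector_insert pair_def \<sigma>_def)
  then have "card (sign_vector h (insert q Q) ` S) \<le> card (pair ` S)"
    using fin_pair by (simp only: card_image_le)
  also have "\<dots> \<le> card (A \<union> T \<times> {-1, 0, 1})"
    using fin_A fin(2) by (intro card_mono) (auto simp: A_def pair_def sgn_real_def split: if_splits)
  also have "\<dots> \<le> card A + card (T \<times> {-1::real, 0, 1})"
    by (rule card_Un_le)
  finally have "card (sign_vector h (insert q Q) ` S) \<le> card A + 3 * card T"
    by (simp add: card_cartesian_product)
  moreover have "inj_on fst A"
  proof (rule inj_onI)
    fix u w assume "u \<in> A" "w \<in> A" and "fst u = fst w"
    then obtain x y where xy: "x \<in> S" "y \<in> S" "\<sigma> x \<notin> T" "u = pair x" "w = pair y"
      unfolding A_def by blast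
    then have "\<sigma> x = \<sigma> y"
      using \<open>fst u = fst w\<close> by (simp add: pair_def)
    then have "sgn (h q x) = sgn (h q y)"
      using sgn_eq_if_sign_vector_eq_not_on_zero_set[of h S x y Q q] affine \<open>convex S\<close> xy(1-3)
      unfolding \<sigma>_def T_def by blast
    then show "u = w"
      using xy \<open>\<sigma> x = \<sigma> y\<close> by (simp add: pair_def)
  qed
  then have "card A \<le> card (\<sigma> ` S - T)"
    using fin by (subst card_image[symmetric]) (auto intro!: card_mono simp: A_def pair_def)
  moreover have "card (\<sigma> ` S - T) + card T = card (\<sigma> ` S)"
    using fin \<open>T \<subseteq> \<sigma> ` S\<close> by (simp add: card_Diff_subset card_mono)
  ultimately show ?thesis
    unfolding \<sigma>_def T_def by linarith
qed

lemma affine_zero_set_affine_function: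
  assumes "\<And>x. f x = c \<bullet> x + e"
  shows "affine {x. f x = 0}"
proof -
  have "{x. f x = 0} = {x. c \<bullet> x = - e}"
    using assms by (auto simp: algebra_simps)
  then show ?thesis by (simp add: affine_hyperplane)
qed

lemma aff_dim_affine_psubset:
  assumes "affine S" "affine T" "T \<subset> S"
  shows "aff_dim T < aff_dim S"
proof -
  have "affine hull T \<subset> affine hull S"
    using assms by (simp add: hull_same)
  then show ?thesis by (rule aff_dim_psubset)
qed

lemma aff_dim_Int_zero_set_less:
  assumes "\<And>x. f x = c \<bullet> x + e" "affine S" "x \<in> S" "y \<in> S" "sgn (f x) \<noteq> sgn (f y)"
  shows "aff_dim (S \<inter> {x. f x = 0}) < aff_dim S"
proof (rule aff_dim_affine_psubset)
  show "affine (S \<inter> {x. f x = 0})"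
    using assms(1,2) by (intro affine_Int affine_zero_set_affine_function)
  have "f x \<noteq> 0 \<or> f y \<noteq> 0"
    using assms(5) by auto
  then show "S \<inter> {x. f x = 0} \<subset> S"
    using assms(3,4) by blast
qed (rule assms(2))

lemma card_sign_vector_image_le:
  fixes h :: "'i \<Rightarrow> 'a::euclidean_space \<Rightarrow> real"
  assumes affine: "\<And>r. \<exists>c e. \<forall>x. h r x = c \<bullet> x + e"
    and "finite Q" "affine S" "aff_dim S \<le> int d"
  shows "card (sign_vector h Q ` S) \<le> sign_vector_bound (card Q) d"
  using assms(2-4)
proof (induction Q arbitrary: S d rule: finite_induct)
  case empty
  have "card (sign_vector h {} ` S) \<le> card {\<lambda>_ :: 'i. undefined :: real}"
    by (rule card_mono) (auto simp: sign_vector_def)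
  then show ?case by simp
next
  case (insert q Q)
  have card_insert: "card (insert q Q) = Suc (card Q)"
    using insert.hyps by simp
  consider (same_sign) "\<forall>x\<in>S. \<forall>y\<in>S. sgn (h q x) = sgn (h q y)"
    | (sign_change) x y where "x \<in> S" "y \<in> S" "sgn (h q x) \<noteq> sgn (h q y)"
    by blast
  then show ?case
  proof cases
    case same_sign
    have "sgn (h q x) = sgn (h q y)" if "x \<in> S" "y \<in> S" for x y
      using same_sign that by blast
    with insert.hyps(1) have "card (sign_vector h (insert q Q) ` S) \<le> card (sign_vector h Q ` S)"
      by (rule card_sign_vector_image_insert_le_if_same_sign)
    also have "\<dots> \<le> sign_vector_bound (card Q) d"
      by (rule insert.IH[OF insert.prems])
    also have "\<dots> \<le> sign_vector_bound (card (insert q Q)) d"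
      using card_insert by (intro sign_vector_bound_mono) simp
    finally show ?thesis .
  next
    case sign_change
    define Z where "Z = S \<inter> {x. h q x = 0}"
    obtain c e where hq: "\<forall>x. h q x = c \<bullet> x + e"
      using affine by blast
    then have "affine Z"
      unfolding Z_def using insert.prems(1) by (intro affine_Int affine_zero_set_affine_function) auto
    have "aff_dim Z < aff_dim S"
      unfolding Z_def using hq insert.prems(1) sign_change by (intro aff_dim_Int_zero_set_less) auto
    moreover have "1 \<le> aff_dim S"
    proof -
      have "aff_dim {x, y} \<le> aff_dim S"
        using sign_change by (intro aff_dim_subset) auto
      moreover have "x \<noteq> y"
        using sign_change(3) by auto
      ultimately show ?thesis by (simp add: aff_dim_2)
    qed
    ultimately obtain d' where d': "d = Suc d'" "aff_dim Z \<le> int d'"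
      using insert.prems(2) by (cases d) auto
    have "card (sign_vector h (insert q Q) ` S)
        \<le> card (sign_vector h Q ` S) + 2 * card (sign_vector h Q ` Z)"
      unfolding Z_def using affine insert.prems(1) insert.hyps(1)
      by (intro card_sign_vector_image_insert_le affine_imp_convex)
    also have "\<dots> \<le> sign_vector_bound (card Q) (Suc d') + 2 * sign_vector_bound (card Q) d'"
      using insert.IH[OF insert.prems(1)] insert.IH[OF \<open>affine Z\<close> d'(2)] d'(1) insert.prems(2)
      by (intro add_mono mult_le_mono2) simp_all
    also have "\<dots> = sign_vector_bound (card (insert q Q)) d"
      by (simp add: card_insert d'(1) sign_vector_bound_Suc_Suc)
    finally show ?thesis .
  qed
qed

lemma card_sign_vector_image_le_if_covered_by_zero_sets:
  fixes h :: "'i \<Rightarrow> 'a::euclidean_space \<Rightarrow> real"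
  assumes affine: "\<And>r. \<exists>c e. \<forall>x. h r x = c \<bullet> x + e"
    and "finite Q"
    and cover: "S \<subseteq> (\<Union>p\<in>Q. {x. h p x = 0})"
    and proper: "\<And>p. p \<in> Q \<Longrightarrow> {x. h p x = 0} \<noteq> UNIV"
  shows "card (sign_vector h Q ` S) \<le> card Q * sign_vector_bound (card Q - 1) (DIM('a) - 1)"
proof -
  define Z where "Z p = {x. h p x = 0}" for p
  have "card (sign_vector h Q ` S) \<le> card (\<Union>p\<in>Q. sign_vector h Q ` Z p)"
    using cover \<open>finite Q\<close> unfolding Z_def
    by (intro card_mono) (blast intro: finite_sign_vector_image)+
  also have "\<dots> \<le> (\<Sum>p\<in>Q. card (sign_vector h Q ` Z p))"
    by (rule card_UN_le[OF \<open>finite Q\<close>])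
  also have "\<dots> \<le> (\<Sum>p\<in>Q. sign_vector_bound (card Q - 1) (DIM('a) - 1))"
  proof (rule sum_mono)
    fix p assume "p \<in> Q"
    then have Q: "Q = insert p (Q - {p})" by blast
    have "affine (Z p)"
      unfolding Z_def using affine[of p] by (metis affine_zero_set_affine_function)
    moreover have "aff_dim (Z p) < aff_dim (UNIV :: 'a set)"
      using \<open>affine (Z p)\<close> proper[OF \<open>p \<in> Q\<close>] unfolding Z_def
      by (intro aff_dim_affine_psubset) auto
    ultimately have "card (sign_vector h (Q - {p}) ` Z p) \<le> sign_vector_bound (card Q - 1) (DIM('a) - 1)"
      using affine \<open>finite Q\<close> \<open>p \<in> Q\<close>
      by (intro card_sign_vector_image_le[of h, THEN order_trans]) (auto simp: aff_dim_UNIV)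
    moreover have "card (sign_vector h Q ` Z p) \<le> card (sign_vector h (Q - {p}) ` Z p)"
    proof (intro card_image_le_card_image_if_factors finite_sign_vector_image)
      fix x y assume "x \<in> Z p" "y \<in> Z p" "sign_vector h (Q - {p}) x = sign_vector h (Q - {p}) y"
      then show "sign_vector h Q x = sign_vector h Q y"
        unfolding Z_def using sign_vector_insert[of h p "Q - {p}"] Q by (metis mem_Collect_eq sgn_zero)
    qed (use \<open>finite Q\<close> in simp)
    ultimately show "card (sign_vector h Q ` Z p) \<le> sign_vector_bound (card Q - 1) (DIM('a) - 1)"
      by linarith
  qed
  also have "\<dots> = card Q * sign_vector_bound (card Q - 1) (DIM('a) - 1)"
    by simp
  finally show ?thesis .
qed

section \<open>Binomial estimates\<close>

lemma two_pow_le_binomial: "t \<le> n \<Longrightarrow> 2 ^ t \<le> (n + t) choose t"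
proof (induction t)
  case (Suc t)
  have "Suc t * 2 ^ Suc t = (2 * Suc t) * 2 ^ t"
    by simp
  also have "\<dots> \<le> Suc (n + t) * 2 ^ t"
    using Suc.prems by (intro mult_right_mono) auto
  also have "\<dots> \<le> Suc (n + t) * ((n + t) choose t)"
    using Suc by (intro mult_le_mono2) simp
  also have "\<dots> = Suc t * (Suc (n + t) choose Suc t)"
    by (metis Suc_times_binomial_eq mult.commute)
  finally have "Suc t * 2 ^ Suc t \<le> Suc t * (Suc (n + t) choose Suc t)" .
  then show ?case
    by (simp only: mult_le_cancel1 add_Suc_right)
qed simp

lemma two_pow_le_mult_binomial:
  assumes "1 \<le> n" "n \<le> K" "K \<le> 2 * n"
  shows "(2::nat) ^ K \<le> n * 2 ^ n * (K choose n)"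
proof -
  define t where "t = K - n"
  have K: "K = n + t" "t \<le> n" using assms by (auto simp: t_def)
  have "2 ^ t \<le> K choose n"
    using two_pow_le_binomial[OF K(2)] binomial_symmetric[of t K] K by simp
  then have "2 ^ K \<le> 2 ^ n * (K choose n)"
    by (simp add: K(1) power_add)
  also have "\<dots> \<le> n * 2 ^ n * (K choose n)"
    using assms(1) by simp
  finally show ?thesis .
qed

lemma sign_vector_bound_le:
  assumes "2 * d \<le> q"
  shows "sign_vector_bound q d \<le> (q choose d) * 2 ^ Suc d"
proof -
  have "sign_vector_bound q d \<le> (\<Sum>i\<le>d. (q choose d) * 2 ^ i)"
    unfolding sign_vector_bound_def using assms
    by (intro sum_mono mult_right_mono binomial_mono) auto
  also have "\<dots> = (q choose d) * (\<Sum>i\<le>d. 2 ^ i)"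
    by (simp add: sum_distrib_left)
  also have "(\<Sum>i\<le>d. 2 ^ i) \<le> (2::nat) ^ Suc d"
    by (induction d) auto
  finally show ?thesis by simp
qed

lemma mult_sign_vector_bound_le:
  assumes "1 \<le> n" "2 * n \<le> K"
  shows "K * sign_vector_bound (K - 1) (n - 1) \<le> n * 2 ^ n * (K choose n)"
proof -
  obtain q d where qd: "K = Suc q" "n = Suc d"
    using assms by (metis Suc_le_D le_trans mult_2 le_add1 One_nat_def)
  moreover have "2 * d \<le> q"
    using assms qd by simp
  ultimately have "K * sign_vector_bound (K - 1) (n - 1) \<le> Suc q * ((q choose d) * 2 ^ Suc d)"
    by (simp only: diff_Suc_1) (intro mult_le_mono2 sign_vector_bound_le)
  also have "\<dots> = (Suc q choose Suc d) * Suc d * 2 ^ Suc d"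
    by (simp only: Suc_times_binomial_eq mult.assoc[symmetric])
  finally show ?thesis
    using qd by (simp add: algebra_simps)
qed

lemma min_two_pow_mult_sign_vector_bound_le:
  assumes "1 \<le> n" "n \<le> K" "q \<le> K"
  shows "min (2 ^ q) (q * sign_vector_bound (q - 1) (n - 1)) \<le> n * 2 ^ n * (K choose n)"
proof (cases "K \<le> 2 * n")
  case True
  have "min (2 ^ q) (q * sign_vector_bound (q - 1) (n - 1)) \<le> 2 ^ q"
    by simp
  also have "\<dots> \<le> 2 ^ K"
    using assms(3) by (intro power_increasing) auto
  also have "\<dots> \<le> n * 2 ^ n * (K choose n)"
    using assms(1,2) True by (rule two_pow_le_mult_binomial)
  finally show ?thesis .
next
  case False
  have "min (2 ^ q) (q * sign_vector_bound (q - 1) (n - 1)) \<le> q * sign_vector_bound (q - 1) (n - 1)"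
    by simp
  also have "\<dots> \<le> K * sign_vector_bound (K - 1) (n - 1)"
    using assms(3) by (intro mult_le_mono sign_vector_bound_mono) auto
  also have "\<dots> \<le> n * 2 ^ n * (K choose n)"
    using assms(1) False by (intro mult_sign_vector_bound_le) auto
  finally show ?thesis .
qed

section \<open>Tropical prevarieties\<close>

definition trop_active :: "(nat \<Rightarrow> nat \<Rightarrow> 'n::finite \<Rightarrow> nat) \<Rightarrow> (nat \<Rightarrow> nat \<Rightarrow> real)
    \<Rightarrow> (nat \<Rightarrow> nat) \<Rightarrow> nat \<Rightarrow> real^'n \<Rightarrow> (nat \<times> nat) set" where
  "trop_active a b mc k x = {(i, j) \<in> trop_index mc k. trop_mono a b i j x = trop_poly a b mc i x}"

definition trop_pairs :: "(nat \<Rightarrow> nat) \<Rightarrow> nat \<Rightarrow> (nat \<times> nat \<times> nat) set" where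
  "trop_pairs mc k = {(i, j, j'). i < k \<and> j < j' \<and> j' < mc i}"

definition trop_mono_diff :: "(nat \<Rightarrow> nat \<Rightarrow> 'n::finite \<Rightarrow> nat) \<Rightarrow> (nat \<Rightarrow> nat \<Rightarrow> real)
    \<Rightarrow> nat \<times> nat \<times> nat \<Rightarrow> real^'n \<Rightarrow> real" where
  "trop_mono_diff a b p x = (case p of (i, j, j') \<Rightarrow> trop_mono a b i j x - trop_mono a b i j' x)"

lemma trop_mono_eq_inner: "trop_mono a b i j x = (\<chi> l. real (a i j l)) \<bullet> x + b i j"
  by (simp add: trop_mono_def inner_vec_def)

lemma affine_trop_mono_diff: "\<exists>c e. \<forall>x. trop_mono_diff a b p x = c \<bullet> x + e"
proof -
  obtain i j j' where p: "p = (i, j, j')" by (cases p) auto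
  show ?thesis
    by (rule exI[of _ "(\<chi> l. real (a i j l)) - (\<chi> l. real (a i j' l))"], rule exI[of _ "b i j - b i j'"])
      (simp add: p trop_mono_diff_def trop_mono_eq_inner inner_diff_left)
qed

lemma trop_mono_eq_imp_coeffs_eq:
  fixes a :: "nat \<Rightarrow> nat \<Rightarrow> 'n::finite \<Rightarrow> nat"
  assumes "\<And>x. trop_mono a b i j x = trop_mono a b i j' x"
  shows "a i j = a i j' \<and> b i j = b i j'"
proof
  show "b i j = b i j'"
    using assms[of 0] by (simp add: trop_mono_def)
  show "a i j = a i j'"
  proof
    fix l
    show "a i j l = a i j' l"
      using assms[of "axis l 1"] \<open>b i j = b i j'\<close> by (simp add: trop_mono_eq_inner inner_axis)
  qed
qed

lemma trop_mono_eq_poly_iff: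
  assumes "j < mc i"
  shows "trop_mono a b i j x = trop_poly a b mc i x \<longleftrightarrow> (\<forall>j'<mc i. trop_mono a b i j x \<le> trop_mono a b i j' x)"
proof
  have "trop_poly a b mc i x \<le> trop_mono a b i j' x" if "j' < mc i" for j'
    unfolding trop_poly_def using that by (intro Min_le) auto
  then show "\<forall>j'<mc i. trop_mono a b i j x \<le> trop_mono a b i j' x"
    if "trop_mono a b i j x = trop_poly a b mc i x"
    using that by simp
next
  assume "\<forall>j'<mc i. trop_mono a b i j x \<le> trop_mono a b i j' x"
  then show "trop_mono a b i j x = trop_poly a b mc i x"
    unfolding trop_poly_def using assms by (intro Min_eqI[symmetric]) auto
qed

lemma trop_cell_eq_active:
  assumes "B \<subseteq> trop_index mc k" "x \<in> trop_cell a b mc k B"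
  shows "B = trop_active a b mc k x"
proof (intro equalityI subsetI)
  fix p assume "p \<in> B"
  then show "p \<in> trop_active a b mc k x"
    using assms unfolding trop_cell_def trop_active_def by (cases p) auto
next
  fix p assume "p \<in> trop_active a b mc k x"
  then show "p \<in> B"
    using assms(2) unfolding trop_cell_def trop_active_def by (cases p) force
qed

lemma trop_index_eq_Sigma: "trop_index mc k = Sigma {..<k} (\<lambda>i. {..<mc i})"
  by (auto simp: trop_index_def)

lemma finite_trop_faces_card_le:
  "finite (trop_faces a b mc k) \<and>
   card (trop_faces a b mc k) \<le> card (trop_active a b mc k ` trop_prevariety a b mc k)"
proof -
  define V where "V = trop_prevariety a b mc k"
  define face where "face B = closure (trop_cell a b mc k B)" for B
  have faces: "trop_faces a b mc k \<subseteq> face ` trop_active a b mc k ` V"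
  proof
    fix F assume "F \<in> trop_faces a b mc k"
    then obtain B where B: "F = face B" "B \<subseteq> trop_index mc k"
        "trop_cell a b mc k B \<noteq> {}" "trop_cell a b mc k B \<subseteq> V"
      unfolding trop_faces_def face_def V_def by blast
    then obtain x where x: "x \<in> trop_cell a b mc k B" by blast
    have "B = trop_active a b mc k x"
      using B(2) x by (rule trop_cell_eq_active)
    moreover have "x \<in> V"
      using B(4) x by blast
    ultimately show "F \<in> face ` trop_active a b mc k ` V"
      using B(1) by blast
  qed
  have "trop_active a b mc k ` V \<subseteq> Pow (trop_index mc k)"
    by (auto simp: trop_active_def)
  then have fin: "finite (trop_active a b mc k ` V)"
    by (rule finite_subset) (simp add: trop_index_eq_Sigma)
  have "card (trop_faces a b mc k) \<le> card (face ` trop_active a b mc k ` V)"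
    using fin faces by (intro card_mono) auto
  also have "\<dots> \<le> card (trop_active a b mc k ` V)"
    using fin by (rule card_image_le)
  finally show ?thesis
    using fin faces unfolding V_def by (auto intro: finite_subset)
qed

lemma card_less_pairs: "card {(j, j'). j < j' \<and> j' < (N::nat)} = N choose 2"
proof (induction N)
  case (Suc N)
  have "{(j, j'). j < j' \<and> j' < Suc N} = {(j, j'). j < j' \<and> j' < N} \<union> (\<lambda>j. (j, N)) ` {..<N}"
    by auto
  also have "card \<dots> = card {(j, j'). j < j' \<and> j' < N} + card ((\<lambda>j. (j, N)) ` {..<N})"
    by (rule card_Un_disjoint) (auto intro: finite_subset[of _ "{..<N} \<times> {..<N}"])
  also have "card ((\<lambda>j. (j, N)) ` {..<N}) = N"
    by (simp add: card_image inj_on_def)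
  finally show ?case
    using Suc.IH by (simp add: numeral_2_eq_2)
qed simp

lemma trop_pairs_eq_Sigma: "trop_pairs mc k = Sigma {..<k} (\<lambda>i. {(j, j'). j < j' \<and> j' < mc i})"
  by (auto simp: trop_pairs_def)

lemma finite_trop_pairs: "finite (trop_pairs mc k)"
proof -
  have "finite {(j, j'). j < j' \<and> j' < mc i}" for i
    by (rule finite_subset[of _ "{..<mc i} \<times> {..<mc i}"]) auto
  then show ?thesis
    unfolding trop_pairs_eq_Sigma by auto
qed

lemma card_trop_pairs_le:
  assumes "\<And>i. i < k \<Longrightarrow> mc i \<le> m"
  shows "card (trop_pairs mc k) \<le> k * (m choose 2)"
proof -
  have "finite {(j, j'). j < j' \<and> j' < mc i}" for i
    by (rule finite_subset[of _ "{..<mc i} \<times> {..<mc i}"]) auto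
  then have "card (trop_pairs mc k) = (\<Sum>i<k. mc i choose 2)"
    unfolding trop_pairs_eq_Sigma by (simp add: card_less_pairs)
  also have "\<dots> \<le> (\<Sum>i<k. m choose 2)"
    using assms by (intro sum_mono binomial_right_mono) auto
  finally show ?thesis by simp
qed

lemma trop_active_eq_if_sign_vector_eq:
  assumes "sign_vector (trop_mono_diff a b) (trop_pairs mc k) x
    = sign_vector (trop_mono_diff a b) (trop_pairs mc k) y"
  shows "trop_active a b mc k x = trop_active a b mc k y"
proof -
  have sgn_eq: "sgn (trop_mono a b i j x - trop_mono a b i j' x) = sgn (trop_mono a b i j y - trop_mono a b i j' y)"
    if "(i, j, j') \<in> trop_pairs mc k" for i j j'
    using fun_cong[OF assms, of "(i, j, j')"] that by (simp add: sign_vector_def trop_mono_diff_def)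
  have "trop_mono a b i j x \<le> trop_mono a b i j' x \<longleftrightarrow> trop_mono a b i j y \<le> trop_mono a b i j' y"
    if "i < k" "j < mc i" "j' < mc i" for i j j'
  proof (cases j j' rule: linorder_cases)
    case less
    then show ?thesis
      using sgn_eq[of i j j'] that by (auto simp: trop_pairs_def sgn_real_def split: if_splits)
  next
    case greater
    then show ?thesis
      using sgn_eq[of i j' j] that by (auto simp: trop_pairs_def sgn_real_def split: if_splits)
  qed simp
  then show ?thesis
    unfolding trop_active_def trop_index_def by (auto simp: trop_mono_eq_poly_iff)
qed

lemma trop_active_ex_other:
  assumes "x \<in> trop_prevariety a b mc k" "(i, j) \<in> trop_active a b mc k x"
  obtains j' where "j' \<noteq> j" "(i, j') \<in> trop_active a b mc k x"
proof -
  have "i < k"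
    using assms(2) by (simp add: trop_active_def trop_index_def)
  then obtain j0 j1 where j: "j0 < mc i" "j1 < mc i" "j0 \<noteq> j1"
      "trop_mono a b i j0 x = trop_poly a b mc i x" "trop_mono a b i j1 x = trop_poly a b mc i x"
    using assms(1) unfolding trop_prevariety_def trop_hypersurface_def by blast
  show ?thesis
  proof (cases "j0 = j")
    case True
    then show ?thesis
      using that[of j1] j \<open>i < k\<close> by (auto simp: trop_active_def trop_index_def)
  next
    case False
    then show ?thesis
      using that[of j0] j \<open>i < k\<close> by (auto simp: trop_active_def trop_index_def)
  qed
qed

text \<open>On V every active monomial is tied with another one, so the active set is recovered
  from its set of tied pairs.\<close>

lemma card_trop_active_image_le_two_pow:
  "card (trop_active a b mc k ` trop_prevariety a b mc k) \<le> 2 ^ card (trop_pairs mc k)"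
proof -
  define V where "V = trop_prevariety a b mc k"
  define ties where "ties B = {(i, j, j') \<in> trop_pairs mc k. (i, j) \<in> B \<and> (i, j') \<in> B}" for B
  define untie where "untie (T :: (nat \<times> nat \<times> nat) set) = {(i, j). \<exists>j'. (i, j, j') \<in> T \<or> (i, j', j) \<in> T}" for T
  have recover: "untie (ties B) = B" if B: "B \<in> trop_active a b mc k ` V" for B
  proof (intro equalityI subsetI)
    fix p assume "p \<in> untie (ties B)"
    then show "p \<in> B" unfolding untie_def ties_def by auto
  next
    fix p assume "p \<in> B"
    obtain x where x: "x \<in> trop_prevariety a b mc k" "B = trop_active a b mc k x"
      using B unfolding V_def by blast
    obtain i j where p: "p = (i, j)" by (cases p)
    then have "(i, j) \<in> trop_active a b mc k x"
      using \<open>p \<in> B\<close> x(2) by simp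
    with x(1) obtain j' where "j' \<noteq> j" "(i, j') \<in> trop_active a b mc k x"
      by (rule trop_active_ex_other)
    moreover have "i < k" "j < mc i" "j' < mc i"
      using \<open>(i, j) \<in> trop_active a b mc k x\<close> \<open>(i, j') \<in> trop_active a b mc k x\<close>
      by (simp_all add: trop_active_def trop_index_def)
    ultimately have "(i, j, j') \<in> ties B \<or> (i, j', j) \<in> ties B"
      using \<open>p \<in> B\<close> p x(2) by (cases j j' rule: linorder_cases) (simp_all add: ties_def trop_pairs_def)
    then show "p \<in> untie (ties B)"
      unfolding untie_def p by blast
  qed
  have "inj_on ties (trop_active a b mc k ` V)"
    by (rule inj_on_inverseI[of _ untie]) (rule recover)
  then have "card (trop_active a b mc k ` V) = card (ties ` trop_active a b mc k ` V)"
    by (simp add: card_image)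
  also have "\<dots> \<le> card (Pow (trop_pairs mc k))"
    using finite_trop_pairs by (intro card_mono) (auto simp: ties_def)
  also have "\<dots> = 2 ^ card (trop_pairs mc k)"
    using finite_trop_pairs by (rule card_Pow)
  finally show ?thesis unfolding V_def .
qed

lemma card_trop_active_image_le_card_sign_vector_image:
  "card (trop_active a b mc k ` S) \<le> card (sign_vector (trop_mono_diff a b) (trop_pairs mc k) ` S)"
proof (rule card_image_le_card_image_if_factors)
  show "finite (sign_vector (trop_mono_diff a b) (trop_pairs mc k) ` S)"
    using finite_trop_pairs by (rule finite_sign_vector_image)
qed (rule trop_active_eq_if_sign_vector_eq)

lemma trop_prevariety_subset_zero_sets:
  assumes "0 < k"
  shows "trop_prevariety a b mc k \<subseteq> (\<Union>p\<in>trop_pairs mc k. {x. trop_mono_diff a b p x = 0})"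
proof
  fix x assume "x \<in> trop_prevariety a b mc k"
  then obtain j0 j1 where "j0 < mc 0" "j1 < mc 0" "j0 \<noteq> j1"
      "trop_mono a b 0 j0 x = trop_poly a b mc 0 x" "trop_mono a b 0 j1 x = trop_poly a b mc 0 x"
    using \<open>0 < k\<close> unfolding trop_prevariety_def trop_hypersurface_def by blast
  then have "(0, min j0 j1, max j0 j1) \<in> trop_pairs mc k"
      "trop_mono_diff a b (0, min j0 j1, max j0 j1) x = 0"
    using \<open>0 < k\<close> by (auto simp: trop_pairs_def trop_mono_diff_def min_def max_def)
  then show "x \<in> (\<Union>p\<in>trop_pairs mc k. {x. trop_mono_diff a b p x = 0})"
    by blast
qed

lemma trop_mono_diff_zero_set_ne_UNIV:
  fixes a :: "nat \<Rightarrow> nat \<Rightarrow> 'n::finite \<Rightarrow> nat"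
  assumes "(a i j, b i j) \<noteq> (a i j', b i j')"
  shows "{x. trop_mono_diff a b (i, j, j') x = 0} \<noteq> UNIV"
proof
  assume "{x. trop_mono_diff a b (i, j, j') x = 0} = UNIV"
  then have "trop_mono a b i j x = trop_mono a b i j' x" for x
    unfolding trop_mono_diff_def by auto
  then have "a i j = a i j' \<and> b i j = b i j'"
    by (rule trop_mono_eq_imp_coeffs_eq)
  then show False
    using assms by simp
qed

lemma card_trop_active_image_le_sign_vector_bound:
  fixes a :: "nat \<Rightarrow> nat \<Rightarrow> 'n::finite \<Rightarrow> nat"
  assumes "0 < k"
    and distinct_monos: "\<And>i j j'. i < k \<Longrightarrow> j < mc i \<Longrightarrow> j' < mc i \<Longrightarrow> j \<noteq> j' \<Longrightarrow>
          (a i j, b i j) \<noteq> (a i j', b i j')"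
  shows "card (trop_active a b mc k ` trop_prevariety a b mc k)
    \<le> card (trop_pairs mc k) * sign_vector_bound (card (trop_pairs mc k) - 1) (CARD('n) - 1)"
proof -
  have "card (sign_vector (trop_mono_diff a b) (trop_pairs mc k) ` trop_prevariety a b mc k)
      \<le> card (trop_pairs mc k) * sign_vector_bound (card (trop_pairs mc k) - 1) (DIM(real^'n) - 1)"
  proof (rule card_sign_vector_image_le_if_covered_by_zero_sets)
    show "\<exists>c e. \<forall>x. trop_mono_diff a b p x = c \<bullet> x + e" for p
      by (rule affine_trop_mono_diff)
    show "finite (trop_pairs mc k)"
      by (rule finite_trop_pairs)
    show "trop_prevariety a b mc k \<subseteq> (\<Union>p\<in>trop_pairs mc k. {x. trop_mono_diff a b p x = 0})"
      using \<open>0 < k\<close> by (rule trop_prevariety_subset_zero_sets)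
    show "{x. trop_mono_diff a b p x = 0} \<noteq> UNIV" if p: "p \<in> trop_pairs mc k" for p
    proof -
      obtain i j j' where "p = (i, j, j')" "i < k" "j < j'" "j' < mc i"
        using p unfolding trop_pairs_def by blast
      then show ?thesis
        using distinct_monos[of i j j'] by (simp add: trop_mono_diff_zero_set_ne_UNIV)
    qed
  qed
  then show ?thesis
    using card_trop_active_image_le_card_sign_vector_image[of a b mc k "trop_prevariety a b mc k"]
    by (simp add: DIM_cart)
qed

theorem theorem3p4:
  fixes a :: "nat \<Rightarrow> nat \<Rightarrow> 'n::finite \<Rightarrow> nat" and b :: "nat \<Rightarrow> nat \<Rightarrow> real"
    and mc :: "nat \<Rightarrow> nat" and k m :: nat
  assumes mono_count: "\<And>i. i < k \<Longrightarrow> 1 \<le> mc i \<and> mc i \<le> m"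
    and distinct_monos: "\<And>i j j'. i < k \<Longrightarrow> j < mc i \<Longrightarrow> j' < mc i \<Longrightarrow> j \<noteq> j' \<Longrightarrow>
          (a i j, b i j) \<noteq> (a i j', b i j')"
    and dim: "CARD('n) \<le> k * (m choose 2)"
  shows "finite (trop_faces a b mc k) \<and>
    card (trop_faces a b mc k) \<le> CARD('n) * 2 ^ CARD('n) * ((k * (m choose 2)) choose CARD('n))"
proof -
  define q where "q = card (trop_pairs mc k)"
  define active_sets where "active_sets = trop_active a b mc k ` trop_prevariety a b mc k"
  have "0 < k"
    using dim by (cases k) auto
  have "q \<le> k * (m choose 2)"
    unfolding q_def using mono_count by (intro card_trop_pairs_le) blast
  have "card active_sets \<le> 2 ^ q"
    unfolding active_sets_def q_def by (rule card_trop_active_image_le_two_pow)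
  moreover have "card active_sets \<le> q * sign_vector_bound (q - 1) (CARD('n) - 1)"
    unfolding active_sets_def q_def using \<open>0 < k\<close> distinct_monos
    by (rule card_trop_active_image_le_sign_vector_bound)
  moreover have "min (2 ^ q) (q * sign_vector_bound (q - 1) (CARD('n) - 1))
      \<le> CARD('n) * 2 ^ CARD('n) * ((k * (m choose 2)) choose CARD('n))"
    using dim \<open>q \<le> k * (m choose 2)\<close> by (intro min_two_pow_mult_sign_vector_bound_le) (simp_all add: Suc_leI)
  ultimately show ?thesis
    using finite_trop_faces_card_le[of a b mc k] unfolding active_sets_def by linarith
qed

end
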